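(* Let $\pi^u$ be the prior on $p\times p$ symmetric matrices $\Sigma=(\sigma_{jk})$ under which, independently, for $1\le j<k\le p$: $\sigma_{kj}=\sigma_{jk}$, $\sigma_{jk}\mid\rho_{jk}\sim N\big(0,\frac{\rho_{jk}}{1-\rho_{jk}}\tau_1^2\big)$, $\rho_{jk}\sim\mathrm{Beta}(a,b)$, and for $j=1,\ldots,p$: $\sigma_{jj}\sim\mathrm{Gamma}(1,\lambda/2)$ (shape $1$, rate $\lambda/2$), with $\lambda>0$. Let $\mathcal{U}(\tau)=\{\Sigma\in\mathcal{C}_p:\tau^{-1}\le\lambda_{\min}(\Sigma)\le\lambda_{\max}(\Sigma)\le\tau\}$. If $a=b=1/2$, $\tau_1^2\asymp 1/(np^4\tau^2)$ and $\tau>3$, then $$\pi^u(\Sigma\in\mathcal{U}(\tau))>\Big\{\frac{\lambda\tau}{8}\exp\Big(-\frac{\lambda\tau}{4}-\frac{C}{\sqrt n}\Big)\Big\}^p$$ for some constant $C>0$.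
   Context: $\mathcal{C}_p$ is the set of $p\times p$ positive definite matrices. Here $n$ is the sample size, $p=p_n$ and $\tau_1=\tau_{1,n}$ depend on $n$, and $a_n\asymp b_n$ means $a_n/b_n$ is bounded above and away from zero. *)

theory Defs
  imports "HOL-Probability.Probability" "Jordan_Normal_Form.Char_Poly"
begin

definition beta_density :: "real \<Rightarrow> real \<Rightarrow> real \<Rightarrow> real" where
  "beta_density a b r =
     (if 0 < r \<and> r < 1 then r powr (a - 1) * (1 - r) powr (b - 1) / Beta a b else 0)"

definition gamma_density :: "real \<Rightarrow> real \<Rightarrow> real \<Rightarrow> real" where
  "gamma_density k r x =
     (if 0 < x then r powr k * x powr (k - 1) * exp (- r * x) / Gamma k else 0)"

definition offdiag_density :: "real \<Rightarrow> real \<Rightarrow> real \<Rightarrow> real \<Rightarrow> real" where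
  "offdiag_density a b tau1 x =
     (LINT rho : {0<..<1} | lborel.
        beta_density a b rho * normal_density 0 (tau1 * sqrt (rho / (1 - rho))) x)"

definition entry_idx :: "nat \<Rightarrow> (nat \<times> nat) set" where
  "entry_idx p = {(j, k). j \<le> k \<and> k < p}"

(* the prior pi^u, as a joint law of the independent free entries *)
definition prior_u :: "nat \<Rightarrow> real \<Rightarrow> real \<Rightarrow> real \<Rightarrow> real \<Rightarrow> (nat \<times> nat \<Rightarrow> real) measure" where
  "prior_u p a b tau1 lam =
     PiM (entry_idx p) (\<lambda>(j, k).
        if j = k then density lborel (gamma_density 1 (lam / 2))
        else density lborel (offdiag_density a b tau1))"

definition sym_mat_of :: "nat \<Rightarrow> (nat \<times> nat \<Rightarrow> real) \<Rightarrow> real mat" where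
  "sym_mat_of p s = mat p p (\<lambda>(i, j). s (min i j, max i j))"

definition pos_def_mats :: "nat \<Rightarrow> real mat set" where
  "pos_def_mats p = {A. A \<in> carrier_mat p p \<and> A\<^sup>T = A \<and>
      (\<forall>v \<in> carrier_vec p. v \<noteq> 0\<^sub>v p \<longrightarrow> v \<bullet> (A *\<^sub>v v) > 0)}"

definition lambda_min :: "real mat \<Rightarrow> real" where
  "lambda_min A = Min {k. eigenvalue A k}"

definition lambda_max :: "real mat \<Rightarrow> real" where
  "lambda_max A = Max {k. eigenvalue A k}"

definition U_set :: "nat \<Rightarrow> real \<Rightarrow> real mat set" where
  "U_set p tau = {A \<in> pos_def_mats p. 1 / tau \<le> lambda_min A \<and> lambda_min A \<le> lambda_max A
                                      \<and> lambda_max A \<le> tau}"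

end

theory Submission
  imports Defs
begin

text \<open>Restrict the prior to the box where every diagonal entry lies in $[\tau/4, \tau/2]$ and
  every off-diagonal entry in $[-\delta, \delta]$, $\delta = 1/(4p)$. On the box the matrix is
  diagonally dominant, so its quadratic form lies between $(\tau/4 - 1/4)|v|^2$ and
  $(\tau/2 + 1/4)|v|^2$, hence all eigenvalues lie in $[1/\tau, \tau]$. By independence the box
  has probability $q_d^p\, q_o^{p(p-1)/2}$. The exponential law gives
  $q_d = e^{-\lambda\tau/8} - e^{-\lambda\tau/4} > \frac{\lambda\tau}{8} e^{-\lambda\tau/4}$.
  The off-diagonal law is a Beta(1/2,1/2) mixture of normals $N(0, \tau_1^2 r/(1-r))$; splitting
  the mixture at $r = 1 - x^2$, $x = \tau_1/\delta$, and using Chebyshev on one side gives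
  $q_o \ge 1 - O(x)$, hence $q_o \ge e^{-L x}$ on bounded $x$. Since
  $x = 4 p \tau_1 = O(1/(p\sqrt n))$, the $p^2$ off-diagonal factors cost only $e^{-C p/\sqrt n}$.\<close>

section \<open>Quadratic forms and the Rayleigh quotient\<close>

definition quad_form :: "nat \<Rightarrow> (nat \<Rightarrow> nat \<Rightarrow> real) \<Rightarrow> (nat \<Rightarrow> real) \<Rightarrow> real" where
  "quad_form p c v = (\<Sum>i<p. \<Sum>j<p. v i * c i j * v j)"

definition sq_norm :: "nat \<Rightarrow> (nat \<Rightarrow> real) \<Rightarrow> real" where
  "sq_norm p v = (\<Sum>i<p. (v i)\<^sup>2)"

lemma continuous_on_coordinate: "continuous_on A (\<lambda>v::nat \<Rightarrow> real. v i)"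
  by (rule continuous_on_subset[OF continuous_on_product_coordinates]) auto

lemma continuous_on_sq_norm: "continuous_on A (sq_norm p)"
  unfolding sq_norm_def by (intro continuous_intros continuous_on_coordinate)

lemma continuous_on_quad_form: "continuous_on A (quad_form p c)"
  unfolding quad_form_def by (intro continuous_intros continuous_on_coordinate)

lemma sq_norm_nonneg: "0 \<le> sq_norm p v"
  unfolding sq_norm_def by (intro sum_nonneg) auto

lemma sq_norm_eq_0_iff: "sq_norm p v = 0 \<longleftrightarrow> (\<forall>i<p. v i = 0)"
  unfolding sq_norm_def by (subst sum_nonneg_eq_0_iff) auto

lemma sq_norm_pos_iff: "0 < sq_norm p v \<longleftrightarrow> (\<exists>i<p. v i \<noteq> 0)"
  using sq_norm_nonneg[of p v] sq_norm_eq_0_iff[of p v] by auto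

lemma quad_form_eq_0: "sq_norm p v = 0 \<Longrightarrow> quad_form p c v = 0"
  by (simp add: sq_norm_eq_0_iff quad_form_def)

lemma quad_form_add_scaled:
  assumes sym: "\<forall>i<p. \<forall>j<p. c i j = c j i"
  shows "quad_form p c (\<lambda>i. v i + t * w i)
       = quad_form p c v + 2 * t * (\<Sum>i<p. w i * (\<Sum>j<p. c i j * v j)) + t\<^sup>2 * quad_form p c w"
proof -
  have cross: "(\<Sum>i<p. \<Sum>j<p. v i * c i j * w j) = (\<Sum>i<p. w i * (\<Sum>j<p. c i j * v j))"
  proof -
    have "(\<Sum>i<p. \<Sum>j<p. v i * c i j * w j) = (\<Sum>j<p. \<Sum>i<p. v i * c i j * w j)"
      by (rule sum.swap)
    also have "\<dots> = (\<Sum>j<p. w j * (\<Sum>i<p. c j i * v i))"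
      by (intro sum.cong refl) (auto simp: sum_distrib_left sym mult_ac)
    finally show ?thesis .
  qed
  have "quad_form p c (\<lambda>i. v i + t * w i) = (\<Sum>i<p. \<Sum>j<p. v i * c i j * v j + t * (v i * c i j * w j)
       + t * (w i * c i j * v j) + t\<^sup>2 * (w i * c i j * w j))"
    unfolding quad_form_def by (intro sum.cong refl) (simp add: algebra_simps power2_eq_square)
  also have "\<dots> = quad_form p c v + t * (\<Sum>i<p. \<Sum>j<p. v i * c i j * w j)
       + t * (\<Sum>i<p. \<Sum>j<p. w i * c i j * v j) + t\<^sup>2 * quad_form p c w"
    unfolding quad_form_def by (simp add: sum.distrib sum_distrib_left)
  also have "(\<Sum>i<p. \<Sum>j<p. w i * c i j * v j) = (\<Sum>i<p. w i * (\<Sum>j<p. c i j * v j))"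
    by (simp add: sum_distrib_left mult_ac)
  finally show ?thesis using cross by simp
qed

lemma sq_norm_add_scaled:
  "sq_norm p (\<lambda>i. v i + t * w i) = sq_norm p v + 2 * t * (\<Sum>i<p. w i * v i) + t\<^sup>2 * sq_norm p w"
  unfolding sq_norm_def by (simp add: sum.distrib sum_distrib_left power2_eq_square algebra_simps)

lemma quad_form_eigenvector:
  "\<forall>i<p. (\<Sum>j<p. c i j * v j) = \<mu> * v i \<Longrightarrow> quad_form p c v = \<mu> * sq_norm p v"
  unfolding quad_form_def sq_norm_def
  by (simp add: sum_distrib_left[symmetric] mult.assoc power2_eq_square mult_ac)

lemma linear_coeff_zero_if_nonneg:
  fixes a b :: real
  assumes "\<And>t. 0 \<le> 2 * t * b + t\<^sup>2 * a"
  shows "b = 0"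
proof (rule ccontr)
  assume "b \<noteq> 0"
  define s where "s = 1 / (\<bar>a\<bar> + 1)"
  have s: "0 < s" "s * a < 2"
    unfolding s_def by (auto simp: field_simps abs_if)
  have "2 * (- s * b) * b + (- s * b)\<^sup>2 * a = s * b\<^sup>2 * (s * a - 2)"
    by (simp add: power2_eq_square algebra_simps)
  also have "\<dots> < 0"
    using s \<open>b \<noteq> 0\<close> by (intro mult_pos_neg) auto
  finally show False using assms[of "- s * b"] by linarith
qed

text \<open>The Rayleigh quotient cannot decrease along the residual direction, so the residual
  vanishes.\<close>

lemma rayleigh_minimiser_eigenvector:
  assumes sym: "\<forall>i<p. \<forall>j<p. c i j = c j i"
    and bound: "\<And>v. \<mu> * sq_norm p v \<le> quad_form p c v"
    and attained: "quad_form p c v0 = \<mu> * sq_norm p v0"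
  shows "\<forall>i<p. (\<Sum>j<p. c i j * v0 j) = \<mu> * v0 i"
proof -
  define g where "g i = (\<Sum>j<p. c i j * v0 j) - \<mu> * v0 i" for i
  define b where "b = sq_norm p g"
  have "(\<Sum>i<p. g i * (\<Sum>j<p. c i j * v0 j)) - \<mu> * (\<Sum>i<p. g i * v0 i) = b"
    unfolding b_def sq_norm_def g_def
    by (simp add: sum_subtractf[symmetric] sum_distrib_left power2_eq_square algebra_simps)
  then have "0 \<le> 2 * t * b + t\<^sup>2 * (quad_form p c g - \<mu> * sq_norm p g)" for t
    using bound[of "\<lambda>i. v0 i + t * g i"] attained
    unfolding quad_form_add_scaled[OF sym] sq_norm_add_scaled by (simp add: algebra_simps)
  then have "b = 0" by (rule linear_coeff_zero_if_nonneg)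
  then show ?thesis unfolding b_def g_def sq_norm_eq_0_iff by simp
qed

lemma rayleigh_minimum_attained:
  assumes "p \<ge> 1"
  obtains v0 where "sq_norm p v0 = 1" "\<And>v. quad_form p c v0 * sq_norm p v \<le> quad_form p c v"
proof -
  \<comment> \<open>coordinates from \<open>p\<close> on are pinned to \<open>0\<close>, making the unit sphere compact in the
    product topology of \<open>nat \<Rightarrow> real\<close>\<close>
  define K :: "(nat \<Rightarrow> real) set" where "K = PiE UNIV (\<lambda>i. if i < p then {-1..1} else {0})"
  have "compactin (product_topology (\<lambda>i. euclidean) UNIV) K"
    unfolding K_def compactin_PiE by (auto simp: compactin_euclidean_iff)
  then have "compact K" by (simp add: euclidean_product_topology compactin_euclidean_iff)
  moreover have "closed {v. sq_norm p v = 1}"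
    by (rule closed_Collect_eq) (auto intro: continuous_on_sq_norm)
  ultimately have "compact (K \<inter> {v. sq_norm p v = 1})" by auto
  moreover have "(\<lambda>i. if i = 0 then 1 else 0) \<in> K \<inter> {v. sq_norm p v = 1}"
  proof -
    have "sq_norm p (\<lambda>i. if i = 0 then 1 else 0) = (\<Sum>i<p. if i = 0 then 1 else 0)"
      unfolding sq_norm_def by (intro sum.cong) auto
    then show ?thesis using assms by (auto simp: K_def PiE_iff)
  qed
  then have "K \<inter> {v. sq_norm p v = 1} \<noteq> {}" by blast
  ultimately obtain v0 where v0: "v0 \<in> K \<inter> {v. sq_norm p v = 1}"
    and min: "\<And>u. u \<in> K \<inter> {v. sq_norm p v = 1} \<Longrightarrow> quad_form p c v0 \<le> quad_form p c u"
    using continuous_attains_inf[OF _ _ continuous_on_quad_form] by metis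
  have rayleigh: "quad_form p c v0 * sq_norm p v \<le> quad_form p c v" for v
  proof (cases "sq_norm p v = 0")
    case True
    then show ?thesis by (simp add: quad_form_eq_0)
  next
    case False
    then have pos: "0 < sq_norm p v" using sq_norm_nonneg[of p v] by linarith
    define r where "r = sqrt (sq_norm p v)"
    have r: "r > 0" "r\<^sup>2 = sq_norm p v"
      using pos unfolding r_def by auto
    define u where "u i = (if i < p then v i / r else 0)" for i
    have "sq_norm p u = 1"
      using r pos unfolding u_def sq_norm_def by (simp add: power_divide sum_divide_distrib[symmetric])
    moreover have "v i / r \<in> {-1..1}" if "i < p" for i
    proof -
      have "(v i)\<^sup>2 \<le> r\<^sup>2"
        unfolding r(2) sq_norm_def using that by (intro member_le_sum) auto
      then have "\<bar>v i\<bar> \<le> r" using power2_le_imp_le[of "\<bar>v i\<bar>" r] r(1) by simp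
      then show ?thesis using r(1) by (simp add: abs_le_iff divide_le_eq le_divide_eq)
    qed
    then have "u \<in> K" by (simp add: K_def u_def PiE_iff)
    ultimately have "quad_form p c v0 \<le> quad_form p c u" by (intro min) auto
    also have "quad_form p c u = quad_form p c v / r\<^sup>2"
      unfolding quad_form_def u_def by (simp add: power2_eq_square sum_divide_distrib)
    finally show ?thesis using r pos by (simp add: le_divide_eq)
  qed
  show ?thesis by (rule that[of v0, OF _ rayleigh]) (use v0 in simp)
qed

lemma symmetric_min_eigenpair:
  assumes "p \<ge> 1" and sym: "\<forall>i<p. \<forall>j<p. c i j = c j i"
  obtains v0 \<mu> where "sq_norm p v0 = 1" "\<forall>i<p. (\<Sum>j<p. c i j * v0 j) = \<mu> * v0 i"
    "\<And>v. \<mu> * sq_norm p v \<le> quad_form p c v"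
proof -
  obtain v0 where v0: "sq_norm p v0 = 1"
    and min: "\<And>v. quad_form p c v0 * sq_norm p v \<le> quad_form p c v"
    using rayleigh_minimum_attained[OF assms(1), where c = c] by blast
  show ?thesis
    by (rule that[OF v0 rayleigh_minimiser_eigenvector[OF sym min] min]) (simp add: v0)
qed

lemma scalar_prod_mult_vec_eq_quad_form:
  "A \<in> carrier_mat p p \<Longrightarrow> v \<in> carrier_vec p \<Longrightarrow>
   v \<bullet> (A *\<^sub>v v) = quad_form p (\<lambda>i j. A $$ (i, j)) (\<lambda>i. v $ i)"
  unfolding quad_form_def
  by (auto simp: scalar_prod_def lessThan_atLeast0 sum_distrib_left mult_ac intro!: sum.cong)

lemma scalar_prod_self_eq_sq_norm: "v \<in> carrier_vec p \<Longrightarrow> v \<bullet> v = sq_norm p (\<lambda>i. v $ i)"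
  unfolding sq_norm_def scalar_prod_def by (auto simp: lessThan_atLeast0 power2_eq_square)

lemma sq_norm_vec_pos: "v \<in> carrier_vec p \<Longrightarrow> v \<noteq> 0\<^sub>v p \<Longrightarrow> 0 < sq_norm p (\<lambda>i. v $ i)"
  unfolding sq_norm_pos_iff by (auto simp: vec_eq_iff)

lemma eigenvalueI_entries:
  assumes A: "A \<in> carrier_mat p p" and nz: "0 < sq_norm p v"
    and ev: "\<forall>i<p. (\<Sum>j<p. A $$ (i, j) * v j) = \<mu> * v i"
  shows "eigenvalue A \<mu>"
proof -
  have "vec p v \<noteq> 0\<^sub>v p" using nz by (auto simp: sq_norm_pos_iff vec_eq_iff)
  moreover have "A *\<^sub>v vec p v = \<mu> \<cdot>\<^sub>v vec p v"
    using A ev by (intro eq_vecI) (auto simp: scalar_prod_def lessThan_atLeast0 mult_ac)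
  ultimately show ?thesis using A unfolding eigenvalue_def eigenvector_def
    by (intro exI[of _ "vec p v"]) auto
qed

lemma eigenvalue_between_form_bounds:
  assumes A: "A \<in> carrier_mat p p" and "eigenvalue A k"
    and lower: "\<And>v. m * sq_norm p v \<le> quad_form p (\<lambda>i j. A $$ (i, j)) v"
    and upper: "\<And>v. quad_form p (\<lambda>i j. A $$ (i, j)) v \<le> M * sq_norm p v"
  shows "m \<le> k \<and> k \<le> M"
proof -
  obtain w where w: "w \<in> carrier_vec p" "w \<noteq> 0\<^sub>v p" "A *\<^sub>v w = k \<cdot>\<^sub>v w"
    using assms(2) A unfolding eigenvalue_def eigenvector_def by auto
  have "w \<bullet> (A *\<^sub>v w) = k * (w \<bullet> w)" using w by simp
  then have "quad_form p (\<lambda>i j. A $$ (i, j)) (\<lambda>i. w $ i) = k * sq_norm p (\<lambda>i. w $ i)"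
    using scalar_prod_mult_vec_eq_quad_form[OF A w(1)] scalar_prod_self_eq_sq_norm[OF w(1)] by simp
  then show ?thesis
    using lower[of "\<lambda>i. w $ i"] upper[of "\<lambda>i. w $ i"] sq_norm_vec_pos[OF w(1,2)]
    by (simp add: mult_le_cancel_right_pos)
qed

lemma finite_eigenvalues:
  fixes A :: "'a :: field mat"
  assumes A: "A \<in> carrier_mat p p"
  shows "finite {k. eigenvalue A k}"
proof -
  have "char_poly A \<noteq> 0" using degree_monic_char_poly[OF A] by auto
  then have "finite {x. poly (char_poly A) x = 0}" by (rule poly_roots_finite)
  then show ?thesis using eigenvalue_root_char_poly[OF A] by simp
qed

lemma symmetric_extreme_eigenvalues:
  assumes A: "A \<in> carrier_mat p p" and sym: "A\<^sup>T = A" and p: "p \<ge> 1"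
  defines "c \<equiv> \<lambda>i j. A $$ (i, j)"
  obtains v0 v1 where
    "0 < sq_norm p v0" "quad_form p c v0 = lambda_min A * sq_norm p v0"
    "0 < sq_norm p v1" "quad_form p c v1 = lambda_max A * sq_norm p v1"
    "\<And>v. lambda_min A * sq_norm p v \<le> quad_form p c v"
    "\<And>v. quad_form p c v \<le> lambda_max A * sq_norm p v"
proof -
  have c_sym: "\<forall>i<p. \<forall>j<p. c i j = c j i"
  proof (intro allI impI)
    fix i j assume "i < p" "j < p"
    then have "A\<^sup>T $$ (j, i) = A $$ (i, j)" using A by simp
    then show "c i j = c j i" using sym unfolding c_def by simp
  qed
  then have neg_sym: "\<forall>i<p. \<forall>j<p. - c i j = - c j i" by simp
  obtain v0 \<mu> where v0: "sq_norm p v0 = 1" "\<forall>i<p. (\<Sum>j<p. c i j * v0 j) = \<mu> * v0 i"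
    and lower: "\<And>v. \<mu> * sq_norm p v \<le> quad_form p c v"
    using symmetric_min_eigenpair[OF p c_sym] by metis
  obtain v1 \<nu> where v1: "sq_norm p v1 = 1" "\<forall>i<p. (\<Sum>j<p. - c i j * v1 j) = \<nu> * v1 i"
    and neg_lower: "\<And>v. \<nu> * sq_norm p v \<le> quad_form p (\<lambda>i j. - c i j) v"
    using symmetric_min_eigenpair[OF p neg_sym] by metis
  have upper: "quad_form p c v \<le> - \<nu> * sq_norm p v" for v
    using neg_lower[of v] by (simp add: quad_form_def sum_negf)
  have v1_eig: "\<forall>i<p. (\<Sum>j<p. c i j * v1 j) = - \<nu> * v1 i"
  proof (intro allI impI)
    fix i assume "i < p"
    then have "- (\<Sum>j<p. c i j * v1 j) = \<nu> * v1 i" using v1(2) by (simp add: sum_negf)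
    then show "(\<Sum>j<p. c i j * v1 j) = - \<nu> * v1 i" by linarith
  qed
  have eig_bounds: "\<mu> \<le> k \<and> k \<le> - \<nu>" if "eigenvalue A k" for k
    using lower upper unfolding c_def by (rule eigenvalue_between_form_bounds[OF A that])
  have "eigenvalue A \<mu>"
    by (rule eigenvalueI_entries[OF A]) (use v0 in \<open>simp_all add: c_def\<close>)
  moreover have "eigenvalue A (- \<nu>)"
    by (rule eigenvalueI_entries[OF A]) (use v1(1) v1_eig in \<open>simp_all add: c_def\<close>)
  ultimately have "lambda_min A = \<mu>" "lambda_max A = - \<nu>"
    unfolding lambda_min_def lambda_max_def using finite_eigenvalues[OF A] eig_bounds
    by (intro Min_eqI Max_eqI; simp)+
  moreover have "quad_form p c v0 = \<mu> * sq_norm p v0"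
    by (rule quad_form_eigenvector[OF v0(2)])
  moreover have "quad_form p c v1 = - \<nu> * sq_norm p v1"
    by (rule quad_form_eigenvector[OF v1_eig])
  ultimately show ?thesis
    using that[of v0 v1] v0(1) v1(1) lower upper by simp
qed

definition form_bounded :: "nat \<Rightarrow> real \<Rightarrow> (nat \<Rightarrow> nat \<Rightarrow> real) \<Rightarrow> (nat \<Rightarrow> real) \<Rightarrow> bool" where
  "form_bounded p tau c v \<longleftrightarrow> sq_norm p v / tau \<le> quad_form p c v \<and> quad_form p c v \<le> tau * sq_norm p v"

lemma U_set_iff_form_bounded:
  assumes A: "A \<in> carrier_mat p p" and sym: "A\<^sup>T = A" and p: "p \<ge> 1" and tau: "tau > 0"
  shows "A \<in> U_set p tau \<longleftrightarrow> (\<forall>v. form_bounded p tau (\<lambda>i j. A $$ (i, j)) v)"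
proof -
  define c where "c = (\<lambda>i j. A $$ (i, j))"
  obtain v0 v1 where
    v0: "0 < sq_norm p v0" "quad_form p c v0 = lambda_min A * sq_norm p v0" and
    v1: "0 < sq_norm p v1" "quad_form p c v1 = lambda_max A * sq_norm p v1" and
    lower: "\<And>v. lambda_min A * sq_norm p v \<le> quad_form p c v" and
    upper: "\<And>v. quad_form p c v \<le> lambda_max A * sq_norm p v"
    using symmetric_extreme_eigenvalues[OF A sym p] unfolding c_def by metis
  show ?thesis
    unfolding c_def[symmetric]
  proof
    assume "A \<in> U_set p tau"
    then have "1 / tau \<le> lambda_min A" "lambda_max A \<le> tau" by (auto simp: U_set_def)
    then have "sq_norm p v / tau \<le> lambda_min A * sq_norm p v"
      "lambda_max A * sq_norm p v \<le> tau * sq_norm p v" for v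
      using mult_right_mono[OF _ sq_norm_nonneg] by (metis divide_inverse_commute inverse_eq_divide)+
    then show "\<forall>v. form_bounded p tau c v"
      unfolding form_bounded_def using lower upper by (meson order_trans)
  next
    assume bounded: "\<forall>v. form_bounded p tau c v"
    have "A \<in> pos_def_mats p"
      unfolding pos_def_mats_def
    proof (intro CollectI conjI ballI impI)
      fix v :: "real vec" assume v: "v \<in> carrier_vec p" "v \<noteq> 0\<^sub>v p"
      have "0 < sq_norm p (\<lambda>i. v $ i) / tau" using sq_norm_vec_pos[OF v] tau by simp
      also have "\<dots> \<le> v \<bullet> (A *\<^sub>v v)"
        using bounded scalar_prod_mult_vec_eq_quad_form[OF A v(1)] by (simp add: form_bounded_def c_def)
      finally show "0 < v \<bullet> (A *\<^sub>v v)" .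
    qed (use A sym in auto)
    moreover have "1 / tau \<le> lambda_min A"
    proof -
      have "sq_norm p v0 / tau \<le> lambda_min A * sq_norm p v0"
        using bounded v0(2) unfolding form_bounded_def by metis
      then have "sq_norm p v0 * 1 \<le> sq_norm p v0 * (tau * lambda_min A)"
        using tau by (simp add: divide_le_eq mult_ac)
      then show ?thesis using v0(1) tau by (simp add: divide_le_eq mult_ac)
    qed
    moreover have "lambda_max A \<le> tau"
    proof -
      have "lambda_max A * sq_norm p v1 \<le> tau * sq_norm p v1"
        using bounded v1(2) unfolding form_bounded_def by metis
      then show ?thesis using v1(1) by simp
    qed
    moreover have "lambda_min A \<le> lambda_max A"
      using upper[of v0] v0 by simp
    ultimately show "A \<in> U_set p tau" by (simp add: U_set_def)
  qed
qed

lemma exists_rat_list_tendsto: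
  "\<exists>X::nat \<Rightarrow> rat list. \<forall>i<p. (\<lambda>k. real_of_rat (X k ! i)) \<longlonglongrightarrow> v i"
proof -
  have "\<forall>k i. \<exists>q::rat. v i < of_rat q \<and> of_rat q < v i + 1 / real (Suc k)"
  proof (intro allI)
    fix k i
    obtain x where "x \<in> \<rat>" "v i < x" "x < v i + 1 / real (Suc k)"
      using Rats_dense_in_real[of "v i" "v i + 1 / real (Suc k)"] by auto
    then show "\<exists>q::rat. v i < of_rat q \<and> of_rat q < v i + 1 / real (Suc k)"
      by (auto elim: Rats_cases)
  qed
  then obtain Q where Q: "\<And>k i. v i < of_rat (Q k i) \<and> of_rat (Q k i) < v i + 1 / real (Suc k)"
    by metis
  have "(\<lambda>k. real_of_rat (Q k i)) \<longlonglongrightarrow> v i" for i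
  proof (rule tendsto_sandwich[of "\<lambda>k. v i" _ _ "\<lambda>k. v i + 1 / real (Suc k)"])
    show "(\<lambda>k. v i + 1 / real (Suc k)) \<longlonglongrightarrow> v i"
      using tendsto_add[OF tendsto_const LIMSEQ_Suc[OF lim_const_over_n[of 1]], of "v i"] by simp
  qed (use Q in \<open>auto simp: less_imp_le\<close>)
  then show ?thesis by (intro exI[of _ "\<lambda>k. map (Q k) [0..<p]"]) simp
qed

text \<open>Reducing to countably many vectors is what makes the event of the main theorem
  measurable.\<close>

lemma form_bounded_rat_iff:
  "(\<forall>xs::rat list. form_bounded p tau c (\<lambda>i. of_rat (xs ! i))) \<longleftrightarrow> (\<forall>v. form_bounded p tau c v)"
proof
  assume rat: "\<forall>xs::rat list. form_bounded p tau c (\<lambda>i. of_rat (xs ! i))"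
  show "\<forall>v. form_bounded p tau c v"
  proof
    fix v
    obtain X :: "nat \<Rightarrow> rat list" where X: "\<forall>i<p. (\<lambda>k. real_of_rat (X k ! i)) \<longlonglongrightarrow> v i"
      using exists_rat_list_tendsto by blast
    have q: "(\<lambda>k. quad_form p c (\<lambda>i. of_rat (X k ! i))) \<longlonglongrightarrow> quad_form p c v"
      using X unfolding quad_form_def by (intro tendsto_intros) auto
    have n: "(\<lambda>k. sq_norm p (\<lambda>i. of_rat (X k ! i))) \<longlonglongrightarrow> sq_norm p v"
      using X unfolding sq_norm_def by (intro tendsto_intros) auto
    have "(\<lambda>k. sq_norm p (\<lambda>i. of_rat (X k ! i)) / tau) \<longlonglongrightarrow> sq_norm p v / tau"
      using tendsto_mult_right[OF n, of "inverse tau"] by (simp add: divide_inverse)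
    then have "sq_norm p v / tau \<le> quad_form p c v"
      by (rule LIMSEQ_le[OF _ q]) (use rat in \<open>auto simp: form_bounded_def\<close>)
    moreover have "quad_form p c v \<le> tau * sq_norm p v"
      by (rule LIMSEQ_le[OF q tendsto_mult_left[OF n]]) (use rat in \<open>auto simp: form_bounded_def\<close>)
    ultimately show "form_bounded p tau c v" by (simp add: form_bounded_def)
  qed
qed auto

lemma offdiag_sum_abs_le:
  assumes off: "\<forall>i<p. \<forall>j<p. i \<noteq> j \<longrightarrow> \<bar>c i j\<bar> \<le> \<epsilon>" and "0 \<le> \<epsilon>"
  shows "\<bar>\<Sum>i<p. \<Sum>j<p. if i = j then 0 else v i * c i j * v j\<bar> \<le> \<epsilon> * p * sq_norm p v"
proof -
  have term_le: "\<bar>if i = j then 0 else v i * c i j * v j\<bar> \<le> \<epsilon> / 2 * ((v i)\<^sup>2 + (v j)\<^sup>2)"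
    if "i < p" "j < p" for i j
  proof (cases "i = j")
    case False
    have "\<bar>v i * c i j * v j\<bar> = \<bar>c i j\<bar> * (\<bar>v i\<bar> * \<bar>v j\<bar>)" by (simp add: abs_mult)
    also have "\<dots> \<le> \<epsilon> * (\<bar>v i\<bar> * \<bar>v j\<bar>)"
      using off that False by (intro mult_right_mono) auto
    also have "\<dots> \<le> \<epsilon> * (((v i)\<^sup>2 + (v j)\<^sup>2) / 2)"
      using sum_squares_bound[of "\<bar>v i\<bar>" "\<bar>v j\<bar>"] \<open>0 \<le> \<epsilon>\<close> by (intro mult_left_mono) auto
    finally show ?thesis using False by simp
  qed (use \<open>0 \<le> \<epsilon>\<close> in simp)
  have "\<bar>\<Sum>i<p. \<Sum>j<p. if i = j then 0 else v i * c i j * v j\<bar>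
      \<le> (\<Sum>i<p. \<Sum>j<p. \<bar>if i = j then 0 else v i * c i j * v j\<bar>)"
    by (rule order_trans[OF sum_abs sum_mono]) (rule sum_abs)
  also have "\<dots> \<le> (\<Sum>i<p. \<Sum>j<p. \<epsilon> / 2 * ((v i)\<^sup>2 + (v j)\<^sup>2))"
    by (intro sum_mono term_le) auto
  also have "\<dots> = \<epsilon> / 2 * (\<Sum>i<p. \<Sum>j<p. (v i)\<^sup>2 + (v j)\<^sup>2)"
    by (simp add: sum_distrib_left)
  also have "(\<Sum>i<p. \<Sum>j<p. (v i)\<^sup>2 + (v j)\<^sup>2) = 2 * p * sq_norm p v"
    by (simp add: sq_norm_def sum.distrib sum_distrib_left[symmetric])
  finally show ?thesis by simp
qed

lemma quad_form_diag_dominant: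
  assumes diag: "\<forall>i<p. d1 \<le> c i i \<and> c i i \<le> d2"
    and off: "\<forall>i<p. \<forall>j<p. i \<noteq> j \<longrightarrow> \<bar>c i j\<bar> \<le> \<epsilon>" and "0 \<le> \<epsilon>"
  shows "(d1 - p * \<epsilon>) * sq_norm p v \<le> quad_form p c v"
    and "quad_form p c v \<le> (d2 + p * \<epsilon>) * sq_norm p v"
proof -
  define D where "D = (\<Sum>i<p. c i i * (v i)\<^sup>2)"
  have "quad_form p c v = (\<Sum>i<p. \<Sum>j<p. (if i = j then c i i * (v i)\<^sup>2 else 0)
      + (if i = j then 0 else v i * c i j * v j))"
    unfolding quad_form_def by (intro sum.cong refl) (auto simp: power2_eq_square mult_ac)
  also have "\<dots> = D + (\<Sum>i<p. \<Sum>j<p. if i = j then 0 else v i * c i j * v j)"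
    unfolding D_def by (simp add: sum.distrib)
  finally have "quad_form p c v = D + (\<Sum>i<p. \<Sum>j<p. if i = j then 0 else v i * c i j * v j)" .
  moreover have "d1 * sq_norm p v \<le> D" "D \<le> d2 * sq_norm p v"
    unfolding D_def sq_norm_def sum_distrib_left using diag by (auto intro!: sum_mono mult_right_mono)
  ultimately show "(d1 - p * \<epsilon>) * sq_norm p v \<le> quad_form p c v"
    and "quad_form p c v \<le> (d2 + p * \<epsilon>) * sq_norm p v"
    using offdiag_sum_abs_le[OF off \<open>0 \<le> \<epsilon>\<close>, of v] by (simp_all add: algebra_simps abs_le_iff)
qed

lemma form_bounded_if_diag_dominant:
  assumes "1 \<le> p" "3 < tau"
    and "\<forall>i<p. tau/4 \<le> c i i \<and> c i i \<le> tau/2"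
    and "\<forall>i<p. \<forall>j<p. i \<noteq> j \<longrightarrow> \<bar>c i j\<bar> \<le> 1 / (4 * real p)"
  shows "form_bounded p tau c v"
proof -
  have "real p * (1 / (4 * real p)) = 1/4" using assms(1) by simp
  then have "(tau/4 - 1/4) * sq_norm p v \<le> quad_form p c v" "quad_form p c v \<le> (tau/2 + 1/4) * sq_norm p v"
    using quad_form_diag_dominant[OF assms(3,4), of v] assms(1) by simp_all
  moreover have "sq_norm p v / tau \<le> (tau/4 - 1/4) * sq_norm p v"
  proof -
    have "1 / tau \<le> 1/3" using assms(2) by (simp add: divide_le_eq)
    then have "1 / tau \<le> tau/4 - 1/4" using assms(2) by linarith
    from mult_right_mono[OF this sq_norm_nonneg] show ?thesis by simp
  qed
  moreover have "(tau/2 + 1/4) * sq_norm p v \<le> tau * sq_norm p v"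
    using assms(2) sq_norm_nonneg[of p v] by (intro mult_right_mono) auto
  ultimately show ?thesis unfolding form_bounded_def by linarith
qed

section \<open>The diagonal law\<close>

lemma gamma_density_1: "0 < r \<Longrightarrow> gamma_density 1 r x = (if 0 < x then r * exp (- r * x) else 0)"
  by (simp add: gamma_density_def)

lemma prob_space_gamma_density_1: "0 < r \<Longrightarrow> prob_space (density lborel (gamma_density 1 r))"
proof -
  assume r: "0 < r"
  have "density lborel (gamma_density 1 r) = density lborel (exponential_density r)"
    using r AE_lborel_singleton[of 0]
    by (intro density_cong) (auto simp: gamma_density_1 exponential_density_def elim!: AE_mp)
  then show ?thesis using prob_space_exponential_density[OF r] by simp
qed

lemma measure_gamma_density_1_interval:
  assumes r: "0 < r" and "0 < a" "a \<le> b"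
  shows "measure (density lborel (gamma_density 1 r)) {a..b} = exp (- r * a) - exp (- r * b)"
proof -
  have "((\<lambda>x. r * exp (- r * x)) has_integral (- exp (- r * b)) - (- exp (- r * a))) {a..b}"
    using \<open>a \<le> b\<close>
    by (intro fundamental_theorem_of_calculus)
       (auto intro!: derivative_eq_intros simp: has_real_derivative_iff_has_vector_derivative[symmetric])
  then have "(\<integral>\<^sup>+x. ennreal (r * exp (- r * x)) * indicator {a..b} x \<partial>lborel) = exp (- r * a) - exp (- r * b)"
    using r by (subst nn_integral_has_integral_lebesgue') auto
  moreover have "emeasure (density lborel (gamma_density 1 r)) {a..b}
      = (\<integral>\<^sup>+x. ennreal (r * exp (- r * x)) * indicator {a..b} x \<partial>lborel)"
    using assms by (subst emeasure_density) (auto simp: gamma_density_1 indicator_def intro!: nn_integral_cong)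
  ultimately show ?thesis using assms by (simp add: measure_def)
qed

lemma gamma_density_1_interval_gt:
  assumes "0 < lam" "0 < tau"
  shows "lam * tau / 8 * exp (- lam * tau / 4) < measure (density lborel (gamma_density 1 (lam / 2))) {tau/4..tau/2}"
proof -
  define y where "y = lam * tau / 8"
  have y: "0 < y" using assms by (simp add: y_def)
  have "measure (density lborel (gamma_density 1 (lam / 2))) {tau/4..tau/2} = exp (- y) - exp (- (2 * y))"
    using assms by (subst measure_gamma_density_1_interval) (auto simp: y_def field_simps)
  also have "\<dots> = (exp y - 1) * exp (- (2 * y))"
    using exp_add[of y "- (2 * y)"] by (simp add: left_diff_distrib)
  finally have "measure (density lborel (gamma_density 1 (lam / 2))) {tau/4..tau/2} = (exp y - 1) * exp (- (2 * y))" .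
  moreover have "y < exp y - 1"
  proof -
    have "(1 + y / 2)\<^sup>2 \<le> (exp (y / 2))\<^sup>2"
      using y by (intro power_mono) auto
    moreover have "(exp (y / 2))\<^sup>2 = exp y"
      using exp_double[of "y / 2"] by simp
    ultimately have "1 + y + y * y / 4 \<le> exp y"
      by (simp add: power2_eq_square algebra_simps)
    moreover have "0 < y * y / 4" using y by simp
    ultimately show ?thesis by linarith
  qed
  moreover have "lam * tau / 8 * exp (- lam * tau / 4) = y * exp (- (2 * y))"
    by (simp add: y_def field_simps)
  ultimately show ?thesis by simp
qed

section \<open>The off-diagonal law\<close>

lemma Beta_real_pos: "0 < a \<Longrightarrow> 0 < b \<Longrightarrow> 0 < Beta a (b::real)"
  by (simp add: Beta_altdef rGamma_inverse_Gamma)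

lemma beta_density_nonneg: "0 < a \<Longrightarrow> 0 < b \<Longrightarrow> 0 \<le> beta_density a b r"
  using Beta_real_pos[of a b] by (simp add: beta_density_def)

lemma nn_integral_beta_density:
  assumes "0 < a" "0 < b"
  shows "(\<integral>\<^sup>+r. ennreal (beta_density a b r) \<partial>lborel) = 1"
proof -
  have "((\<lambda>r. r powr (a - 1) * (1 - r) powr (b - 1) / Beta a b) has_integral Beta a b / Beta a b) {0..1}"
    using has_integral_Beta_real[OF assms] by (rule has_integral_divide)
  then have "(\<integral>\<^sup>+r. ennreal (r powr (a - 1) * (1 - r) powr (b - 1) / Beta a b) * indicator {0..1} r \<partial>lborel) = 1"
    using Beta_real_pos[OF assms] by (subst nn_integral_has_integral_lebesgue') auto
  also have "(\<integral>\<^sup>+r. ennreal (r powr (a - 1) * (1 - r) powr (b - 1) / Beta a b) * indicator {0..1} r \<partial>lborel)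
      = (\<integral>\<^sup>+r. ennreal (beta_density a b r) \<partial>lborel)"
    by (intro nn_integral_cong) (auto simp: beta_density_def indicator_def)
  finally show ?thesis .
qed

lemma normal_density_abs: "normal_density \<mu> \<bar>\<sigma>\<bar> = normal_density \<mu> \<sigma>"
  by (simp add: normal_density_def fun_eq_iff)

lemma nn_integral_normal_density:
  assumes "\<sigma> \<noteq> 0"
  shows "(\<integral>\<^sup>+x. ennreal (normal_density 0 \<sigma> x) \<partial>lborel) = 1"
proof -
  have "(\<integral>\<^sup>+x. ennreal (normal_density 0 \<bar>\<sigma>\<bar> x) \<partial>lborel) = 1"
    using assms by (subst nn_integral_eq_integral) auto
  then show ?thesis by (simp add: normal_density_abs)
qed

lemma prob_space_normal_density_nonzero:
  "\<sigma> \<noteq> 0 \<Longrightarrow> prob_space (density lborel (normal_density 0 \<sigma>))"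
  using prob_space_normal_density[of "\<bar>\<sigma>\<bar>" 0] by (simp add: normal_density_abs)

definition offdiag_kernel :: "real \<Rightarrow> real \<Rightarrow> real \<Rightarrow> real \<Rightarrow> real \<Rightarrow> real" where
  "offdiag_kernel a b t x r = beta_density a b r * normal_density 0 (t * sqrt (r / (1 - r))) x"

lemma offdiag_kernel_measurable [measurable]:
  "(\<lambda>(x, r). offdiag_kernel a b t x r) \<in> borel_measurable (lborel \<Otimes>\<^sub>M lborel)"
  unfolding offdiag_kernel_def beta_density_def normal_density_def by measurable

lemma offdiag_kernel_nonneg: "0 < a \<Longrightarrow> 0 < b \<Longrightarrow> 0 \<le> offdiag_kernel a b t x r"
  by (simp add: offdiag_kernel_def beta_density_nonneg)

lemma offdiag_density_eq_integral: "offdiag_density a b t x = (\<integral>r. offdiag_kernel a b t x r \<partial>lborel)"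
  unfolding offdiag_density_def set_lebesgue_integral_def offdiag_kernel_def
  by (intro Bochner_Integration.integral_cong) (auto simp: beta_density_def indicator_def)

lemma offdiag_density_measurable [measurable]: "offdiag_density a b t \<in> borel_measurable lborel"
  unfolding offdiag_density_eq_integral[abs_def] by measurable

lemma nn_integral_offdiag_kernel_restrict:
  assumes "0 < a" "0 < b" and [measurable]: "S \<in> sets borel"
  shows "(\<integral>\<^sup>+x. ennreal (offdiag_kernel a b t x r) * indicator S x \<partial>lborel)
       = ennreal (beta_density a b r) * (\<integral>\<^sup>+x. ennreal (normal_density 0 (t * sqrt (r / (1 - r))) x) * indicator S x \<partial>lborel)"
  using beta_density_nonneg[OF assms(1,2)]
  by (subst nn_integral_cmult[symmetric]) (auto simp: offdiag_kernel_def ennreal_mult' mult_ac)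

lemma nn_integral_offdiag_kernel:
  assumes "0 < a" "0 < b" "t \<noteq> 0"
  shows "(\<integral>\<^sup>+x. ennreal (offdiag_kernel a b t x r) \<partial>lborel) = ennreal (beta_density a b r)"
proof (cases "0 < r \<and> r < 1")
  case True
  then have "t * sqrt (r / (1 - r)) \<noteq> 0" using assms by simp
  then show ?thesis
    using nn_integral_offdiag_kernel_restrict[OF assms(1,2), of UNIV t r] nn_integral_normal_density by simp
next
  case False
  then show ?thesis by (auto simp: offdiag_kernel_def beta_density_def)
qed

text \<open>The Bochner integral defining \<open>offdiag_density\<close> is \<open>0\<close> wherever the kernel is not
  integrable; since the kernel has total mass \<open>1\<close>, this happens only on a null set.\<close>

lemma offdiag_density_AE_eq:
  assumes "0 < a" "0 < b" "t \<noteq> 0"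
  shows "AE x in lborel. ennreal (offdiag_density a b t x) = (\<integral>\<^sup>+r. ennreal (offdiag_kernel a b t x r) \<partial>lborel)"
proof -
  define F where "F x = (\<integral>\<^sup>+r. ennreal (offdiag_kernel a b t x r) \<partial>lborel)" for x
  have "(\<integral>\<^sup>+x. F x \<partial>lborel) = (\<integral>\<^sup>+r. \<integral>\<^sup>+x. ennreal (offdiag_kernel a b t x r) \<partial>lborel \<partial>lborel)"
    unfolding F_def by (rule lborel_pair.Fubini') measurable
  also have "\<dots> = 1"
    using nn_integral_offdiag_kernel[OF assms] nn_integral_beta_density[OF assms(1,2)] by simp
  finally have "AE x in lborel. F x \<noteq> \<infinity>"
    by (intro nn_integral_PInf_AE) (auto simp: F_def)
  then have "AE x in lborel. ennreal (offdiag_density a b t x) = F x"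
  proof eventually_elim
    fix x assume "F x \<noteq> \<infinity>"
    then have "integrable lborel (offdiag_kernel a b t x)"
      using offdiag_kernel_nonneg[OF assms(1,2)] unfolding F_def
      by (intro integrableI_nonneg) (auto simp: less_top)
    then show "ennreal (offdiag_density a b t x) = F x"
      unfolding F_def offdiag_density_eq_integral
      by (intro nn_integral_eq_integral[symmetric]) (auto simp: offdiag_kernel_nonneg[OF assms(1,2)])
  qed
  then show ?thesis unfolding F_def .
qed

lemma emeasure_offdiag_density:
  assumes "0 < a" "0 < b" "t \<noteq> 0" and [measurable]: "S \<in> sets borel"
  shows "emeasure (density lborel (offdiag_density a b t)) S
    = (\<integral>\<^sup>+r. ennreal (beta_density a b r)
         * emeasure (density lborel (normal_density 0 (t * sqrt (r / (1 - r))))) S \<partial>lborel)"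
proof -
  have "emeasure (density lborel (offdiag_density a b t)) S
      = (\<integral>\<^sup>+x. (\<integral>\<^sup>+r. ennreal (offdiag_kernel a b t x r) \<partial>lborel) * indicator S x \<partial>lborel)"
    using offdiag_density_AE_eq[OF assms(1-3)]
    by (subst emeasure_density) (auto intro!: nn_integral_cong_AE)
  also have "\<dots> = (\<integral>\<^sup>+x. \<integral>\<^sup>+r. ennreal (offdiag_kernel a b t x r) * indicator S x \<partial>lborel \<partial>lborel)"
    by (intro nn_integral_cong nn_integral_multc[symmetric]) measurable
  also have "\<dots> = (\<integral>\<^sup>+r. \<integral>\<^sup>+x. ennreal (offdiag_kernel a b t x r) * indicator S x \<partial>lborel \<partial>lborel)"
    by (rule lborel_pair.Fubini') measurable
  also have "\<dots> = (\<integral>\<^sup>+r. ennreal (beta_density a b r)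
         * emeasure (density lborel (normal_density 0 (t * sqrt (r / (1 - r))))) S \<partial>lborel)"
    by (intro nn_integral_cong) (simp add: nn_integral_offdiag_kernel_restrict[OF assms(1,2,4)] emeasure_density)
  finally show ?thesis .
qed

lemma prob_space_offdiag_density:
  assumes "0 < a" "0 < b" "t \<noteq> 0"
  shows "prob_space (density lborel (offdiag_density a b t))"
proof
  have "emeasure (density lborel (offdiag_density a b t)) UNIV = (\<integral>\<^sup>+r. ennreal (beta_density a b r) \<partial>lborel)"
    unfolding emeasure_offdiag_density[OF assms sets.top[of borel, unfolded space_borel]]
  proof (intro nn_integral_cong)
    fix r
    show "ennreal (beta_density a b r) * emeasure (density lborel (normal_density 0 (t * sqrt (r / (1 - r))))) UNIV
        = ennreal (beta_density a b r)"
    proof (cases "0 < r \<and> r < 1")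
      case True
      then have "t * sqrt (r / (1 - r)) \<noteq> 0" using assms by simp
      then show ?thesis
        using prob_space.emeasure_space_1[OF prob_space_normal_density_nonzero] by simp
    qed (auto simp: beta_density_def)
  qed
  then show "emeasure (density lborel (offdiag_density a b t)) (space (density lborel (offdiag_density a b t))) = 1"
    using nn_integral_beta_density[OF assms(1,2)] by simp
qed

lemma has_integral_inv_sqrt:
  assumes "0 < a"
  shows "((\<lambda>r. 1 / sqrt r) has_integral 2 * sqrt a) {0..a}"
proof -
  have "((\<lambda>r. 1 / sqrt r) has_integral 2 * sqrt a - 2 * sqrt 0) {0..a}"
  proof (rule fundamental_theorem_of_calculus_interior)
    show "continuous_on {0..a} (\<lambda>r. 2 * sqrt r)" by (intro continuous_intros)
    fix r assume "r \<in> {0<..<a}"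
    then show "((\<lambda>r. 2 * sqrt r) has_vector_derivative 1 / sqrt r) (at r)"
      by (auto intro!: derivative_eq_intros simp: has_real_derivative_iff_has_vector_derivative[symmetric] inverse_eq_divide)
  qed (use assms in simp)
  then show ?thesis by simp
qed

lemma has_integral_inv_sqrt_one_minus:
  assumes "0 < \<eta>" "\<eta> \<le> 1"
  shows "((\<lambda>r. 1 / sqrt (1 - r)) has_integral 2 * sqrt \<eta>) {1 - \<eta>..1}"
proof -
  have "((\<lambda>r. 1 / sqrt (1 - r)) has_integral - 2 * sqrt (1 - 1) - - 2 * sqrt (1 - (1 - \<eta>))) {1 - \<eta>..1}"
  proof (rule fundamental_theorem_of_calculus_interior)
    show "continuous_on {1 - \<eta>..1} (\<lambda>r. - 2 * sqrt (1 - r))" by (intro continuous_intros)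
    fix r assume "r \<in> {1 - \<eta><..<1}"
    then show "((\<lambda>r. - 2 * sqrt (1 - r)) has_vector_derivative 1 / sqrt (1 - r)) (at r)"
      by (auto intro!: derivative_eq_intros simp: has_real_derivative_iff_has_vector_derivative[symmetric] inverse_eq_divide)
  qed (use assms in simp)
  then show ?thesis by simp
qed

lemma has_integral_inv_sqrt_one_minus_cube:
  assumes "0 < \<eta>" "\<eta> \<le> 1"
  shows "((\<lambda>r. 1 / ((1 - r) * sqrt (1 - r))) has_integral 2 / sqrt \<eta> - 2) {0..1 - \<eta>}"
proof -
  have "((\<lambda>r. 1 / ((1 - r) * sqrt (1 - r))) has_integral 2 / sqrt (1 - (1 - \<eta>)) - 2 / sqrt (1 - 0)) {0..1 - \<eta>}"
  proof (rule fundamental_theorem_of_calculus)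
    fix r assume "r \<in> {0..1 - \<eta>}"
    then have "0 < 1 - r" using assms by auto
    then show "((\<lambda>r. 2 / sqrt (1 - r)) has_vector_derivative 1 / ((1 - r) * sqrt (1 - r))) (at r within {0..1 - \<eta>})"
      by (auto intro!: derivative_eq_intros simp: has_real_derivative_iff_has_vector_derivative[symmetric]
               field_simps power2_eq_square real_sqrt_mult[symmetric] simp del: real_sqrt_mult)
  qed (use assms in simp)
  then show ?thesis by simp
qed

lemma nn_integral_normal_second_moment:
  assumes "\<sigma> \<noteq> 0"
  shows "(\<integral>\<^sup>+x. ennreal (normal_density 0 \<sigma> x * x\<^sup>2) \<partial>lborel) = \<sigma>\<^sup>2"
proof -
  have "has_bochner_integral lborel (\<lambda>x. normal_density 0 \<bar>\<sigma>\<bar> x * (x - 0) ^ (2 * 1))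
      (fact (2 * 1) / ((2 / \<bar>\<sigma>\<bar>\<^sup>2) ^ 1 * fact 1))"
    using assms by (intro normal_moment_even) simp
  then have "has_bochner_integral lborel (\<lambda>x. normal_density 0 \<sigma> x * x\<^sup>2) (\<sigma>\<^sup>2)"
    using assms by (simp add: normal_density_abs fact_numeral)
  then show ?thesis
    by (subst nn_integral_eq_integral)
       (auto intro: integrable.intros simp: has_bochner_integral_integral_eq)
qed

lemma normal_tail_le:
  assumes "\<sigma> \<noteq> 0" "0 < \<delta>"
  shows "measure (density lborel (normal_density 0 \<sigma>)) {x. \<delta> < \<bar>x\<bar>} \<le> \<sigma>\<^sup>2 / \<delta>\<^sup>2"
proof -
  interpret N: prob_space "density lborel (normal_density 0 \<sigma>)"
    by (rule prob_space_normal_density_nonzero[OF assms(1)])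
  have "emeasure (density lborel (normal_density 0 \<sigma>)) {x. \<delta> < \<bar>x\<bar>}
      = (\<integral>\<^sup>+x. ennreal (normal_density 0 \<sigma> x) * indicator {x. \<delta> < \<bar>x\<bar>} x \<partial>lborel)"
    by (rule emeasure_density) auto
  also have "\<dots> \<le> (\<integral>\<^sup>+x. ennreal (normal_density 0 \<sigma> x * x\<^sup>2) * ennreal (1 / \<delta>\<^sup>2) \<partial>lborel)"
  proof (intro nn_integral_mono)
    fix x
    have "normal_density 0 \<sigma> x * 1 \<le> normal_density 0 \<sigma> x * (x\<^sup>2 / \<delta>\<^sup>2)" if "\<delta> < \<bar>x\<bar>"
    proof -
      have "\<delta>\<^sup>2 \<le> \<bar>x\<bar>\<^sup>2" using that assms(2) by (intro power_mono) auto
      then show ?thesis using assms(2) by (intro mult_left_mono) auto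
    qed
    then show "ennreal (normal_density 0 \<sigma> x) * indicator {x. \<delta> < \<bar>x\<bar>} x
        \<le> ennreal (normal_density 0 \<sigma> x * x\<^sup>2) * ennreal (1 / \<delta>\<^sup>2)"
      by (auto simp: indicator_def ennreal_mult'[symmetric] intro!: ennreal_leI)
  qed
  also have "\<dots> = ennreal (\<sigma>\<^sup>2 / \<delta>\<^sup>2)"
    using nn_integral_normal_second_moment[OF assms(1)]
    by (subst nn_integral_multc) (auto simp: ennreal_mult'[symmetric])
  finally show ?thesis
    using assms by (simp add: N.emeasure_eq_measure)
qed

lemma beta_density_half:
  assumes "0 < r" "r < 1"
  shows "beta_density (1/2) (1/2) r = 1 / (Beta (1/2) (1/2) * sqrt r * sqrt (1 - r))"
proof -
  have "x powr (1/2 - 1) = 1 / sqrt x" if "0 < x" for x :: real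
    using that by (simp add: powr_minus_divide powr_half_sqrt flip: powr_minus)
  then show ?thesis using assms by (simp add: beta_density_def)
qed

lemma normal_mixture_component_tail_le:
  assumes "t \<noteq> 0" "0 < \<delta>" "0 < r" "r < 1"
  shows "measure (density lborel (normal_density 0 (t * sqrt (r / (1 - r))))) {x. \<delta> < \<bar>x\<bar>}
      \<le> (t / \<delta>)\<^sup>2 * r / (1 - r)"
  using normal_tail_le[of "t * sqrt (r / (1 - r))" \<delta>] assms
  by (simp add: power_mult_distrib power_divide mult_ac)

lemma emeasure_normal_density_eq_measure:
  "\<sigma> \<noteq> 0 \<Longrightarrow> emeasure (density lborel (normal_density 0 \<sigma>)) S = measure (density lborel (normal_density 0 \<sigma>)) S"
  using finite_measure.emeasure_eq_measure[OF prob_space.finite_measure[OF prob_space_normal_density_nonzero]]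
  by blast

text \<open>Where the normal component is wide ($r$ near $1$) the tail probability is bounded by $1$,
  elsewhere by Chebyshev; the split point $1 - x^2$ balances the two integrals, each of order $x$.\<close>

lemma offdiag_tail_le:
  assumes "t \<noteq> 0" "0 < \<delta>" and small: "\<bar>t\<bar> / \<delta> \<le> 1/2"
  defines "B \<equiv> Beta (1/2) (1/2 :: real)"
  shows "measure (density lborel (offdiag_density (1/2) (1/2) t)) {x. \<delta> < \<bar>x\<bar>} \<le> 6 * (\<bar>t\<bar> / \<delta>) / B"
proof -
  define x where "x = \<bar>t\<bar> / \<delta>"
  define \<eta> where "\<eta> = x\<^sup>2"
  have B: "0 < B" unfolding B_def by (simp add: Beta_real_pos)
  have x: "0 < x" "x \<le> 1/2" using assms by (auto simp: x_def)
  have "x * x \<le> 1/2 * (1/2)" using x by (intro mult_mono) auto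
  then have \<eta>: "0 < \<eta>" "\<eta> \<le> 1/4" "sqrt \<eta> = x"
    using x unfolding \<eta>_def by (auto simp: power2_eq_square)
  define f1 where "f1 r = x\<^sup>2 / B * (1 / ((1 - r) * sqrt (1 - r)))" for r
  define f2 where "f2 r = 2 / B * (1 / sqrt (1 - r))" for r
  have pointwise: "ennreal (beta_density (1/2) (1/2) r)
        * emeasure (density lborel (normal_density 0 (t * sqrt (r / (1 - r))))) {x. \<delta> < \<bar>x\<bar>}
      \<le> ennreal (f1 r) * indicator {0..1 - \<eta>} r + ennreal (f2 r) * indicator {1 - \<eta>..1} r" for r
  proof (cases "0 < r \<and> r < 1")
    case False
    then show ?thesis by (auto simp: beta_density_def)
  next
    case True
    define m where "m = measure (density lborel (normal_density 0 (t * sqrt (r / (1 - r))))) {x. \<delta> < \<bar>x\<bar>}"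
    have m: "0 \<le> m" "m \<le> 1" "m \<le> x\<^sup>2 * r / (1 - r)"
      using True normal_mixture_component_tail_le[OF assms(1,2), of r] \<open>t \<noteq> 0\<close>
        prob_space.prob_le_1[OF prob_space_normal_density_nonzero]
      by (auto simp: m_def x_def power_divide)
    have w: "beta_density (1/2) (1/2) r = 1 / (B * sqrt r * sqrt (1 - r))"
      using True beta_density_half unfolding B_def by blast
    have s: "0 < sqrt r" "0 < sqrt (1 - r)" "sqrt r * sqrt r = r" "sqrt (1 - r) * sqrt (1 - r) = 1 - r"
      using True by simp_all
    have f_nonneg: "0 \<le> f1 r" "0 \<le> f2 r"
      using s B by (simp_all add: f1_def f2_def)
    have "beta_density (1/2) (1/2) r * m \<le> f1 r * indicator {0..1 - \<eta>} r + f2 r * indicator {1 - \<eta>..1} r"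
    proof (cases "r \<le> 1 - \<eta>")
      case True
      have "beta_density (1/2) (1/2) r * m \<le> 1 / (B * sqrt r * sqrt (1 - r)) * (x\<^sup>2 * r / (1 - r))"
        unfolding w by (rule mult_left_mono) (use m B s in auto)
      also have "\<dots> = f1 r * sqrt r"
      proof -
        have "1 / (B * a * c) * (x\<^sup>2 * (a * a) / (c * c)) = x\<^sup>2 / B * (1 / ((c * c) * c)) * a"
          if "0 < a" "0 < c" for a c :: real
          using that B by (simp add: field_simps)
        from this[OF s(1,2)] show ?thesis unfolding s(3,4) f1_def .
      qed
      also have "\<dots> \<le> f1 r"
        using s(1) f_nonneg \<open>0 < r \<and> r < 1\<close> by (intro mult_left_le) (auto simp: real_sqrt_le_1_iff)
      finally show ?thesis using True \<open>0 < r \<and> r < 1\<close> f_nonneg by (simp add: indicator_def)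
    next
      case False
      then have "1/2 \<le> sqrt r"
        using \<eta> real_sqrt_le_mono[of "1/4" r] by (auto simp: real_sqrt_divide)
      then have "1 / sqrt r \<le> 2"
        using s(1) by (simp add: divide_le_eq)
      then have "1 / sqrt r * (1 / (B * sqrt (1 - r))) \<le> 2 * (1 / (B * sqrt (1 - r)))"
        using s B by (intro mult_right_mono) auto
      then have "beta_density (1/2) (1/2) r \<le> f2 r"
        unfolding w f2_def by (simp add: mult_ac)
      then have "beta_density (1/2) (1/2) r * m \<le> f2 r"
        using m mult_left_le[of m "beta_density (1/2) (1/2) r"] beta_density_nonneg[of "1/2" "1/2" r] by simp
      then show ?thesis using False \<open>0 < r \<and> r < 1\<close> f_nonneg by simp
    qed
    moreover have "emeasure (density lborel (normal_density 0 (t * sqrt (r / (1 - r))))) {x. \<delta> < \<bar>x\<bar>} = ennreal m"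
      unfolding m_def using True \<open>t \<noteq> 0\<close> by (intro emeasure_normal_density_eq_measure) simp
    ultimately show ?thesis
      using m f_nonneg beta_density_nonneg[of "1/2" "1/2" r]
      by (simp add: ennreal_mult'[symmetric] ennreal_plus[symmetric] ennreal_indicator[symmetric] ennreal_leI
          del: ennreal_plus)
  qed
  have "emeasure (density lborel (offdiag_density (1/2) (1/2) t)) {x. \<delta> < \<bar>x\<bar>}
      \<le> (\<integral>\<^sup>+r. ennreal (f1 r) * indicator {0..1 - \<eta>} r + ennreal (f2 r) * indicator {1 - \<eta>..1} r \<partial>lborel)"
    using assms(1) by (subst emeasure_offdiag_density) (auto intro!: nn_integral_mono pointwise)
  also have "\<dots> = (\<integral>\<^sup>+r. ennreal (f1 r) * indicator {0..1 - \<eta>} r \<partial>lborel)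
      + (\<integral>\<^sup>+r. ennreal (f2 r) * indicator {1 - \<eta>..1} r \<partial>lborel)"
    by (rule nn_integral_add) (auto simp: f1_def f2_def)
  also have "(\<integral>\<^sup>+r. ennreal (f1 r) * indicator {0..1 - \<eta>} r \<partial>lborel) = ennreal (x\<^sup>2 / B * (2 / x - 2))"
    unfolding f1_def using \<eta> B
    by (intro nn_integral_has_integral_lebesgue' has_integral_mult_right has_integral_inv_sqrt_one_minus_cube[of \<eta>, unfolded \<eta>(3)])
       auto
  also have "(\<integral>\<^sup>+r. ennreal (f2 r) * indicator {1 - \<eta>..1} r \<partial>lborel) = ennreal (2 / B * (2 * x))"
    unfolding f2_def using \<eta> B
    by (intro nn_integral_has_integral_lebesgue' has_integral_mult_right has_integral_inv_sqrt_one_minus[of \<eta>, unfolded \<eta>(3)])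
       auto
  also have "ennreal (x\<^sup>2 / B * (2 / x - 2)) + ennreal (2 / B * (2 * x)) \<le> ennreal (6 * x / B)"
    using x B by (subst ennreal_plus[symmetric]) (auto intro!: ennreal_leI simp: field_simps power2_eq_square)
  finally show ?thesis
    using finite_measure.emeasure_eq_measure[OF prob_space.finite_measure[OF prob_space_offdiag_density[of "1/2" "1/2" t]]]
      assms(1,2) B
    by (simp add: x_def ennreal_le_iff)
qed

lemma measure_interval_eq_one_minus_tail:
  fixes M :: "real measure"
  assumes "prob_space M" "sets M = sets borel"
  shows "measure M {-\<delta>..\<delta>} = 1 - measure M {x. \<delta> < \<bar>x\<bar>}"
proof -
  interpret prob_space M by (rule assms(1))
  have "{-\<delta>..\<delta>} = space M - {x. \<delta> < \<bar>x\<bar>}"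
    using sets_eq_imp_space_eq[OF assms(2)] by auto
  moreover have "{x. \<delta> < \<bar>x\<bar>} \<in> sets M" using assms(2) by simp
  ultimately show ?thesis by (simp add: prob_compl)
qed

lemma offdiag_interval_ge_one_minus:
  assumes "t \<noteq> 0" "0 < \<delta>" "\<bar>t\<bar> / \<delta> \<le> 1/2"
  shows "1 - 6 * (\<bar>t\<bar> / \<delta>) / Beta (1/2) (1/2) \<le> measure (density lborel (offdiag_density (1/2) (1/2) t)) {-\<delta>..\<delta>}"
  using offdiag_tail_le[OF assms] prob_space_offdiag_density[of "1/2" "1/2" t] assms(1)
  by (subst measure_interval_eq_one_minus_tail) auto

text \<open>A lower bound valid for every scale: the components with $r \le 1/(1 + 2 x^2)$ keep
  at least half of their mass in the interval.\<close>

lemma offdiag_interval_ge: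
  assumes "t \<noteq> 0" "0 < \<delta>"
  defines "B \<equiv> Beta (1/2) (1/2 :: real)"
  shows "1 / (B * sqrt (1 + 2 * (t / \<delta>)\<^sup>2)) \<le> measure (density lborel (offdiag_density (1/2) (1/2) t)) {-\<delta>..\<delta>}"
proof -
  define q where "q = (t / \<delta>)\<^sup>2"
  define a where "a = 1 / (1 + 2 * q)"
  have B: "0 < B" unfolding B_def by (simp add: Beta_real_pos)
  have q: "0 < q" using assms(1,2) by (simp add: q_def)
  then have a: "0 < a" "a < 1" by (auto simp: a_def)
  have pointwise: "ennreal (1 / (2 * B) * (1 / sqrt r)) * indicator {0..a} r
      \<le> ennreal (beta_density (1/2) (1/2) r)
        * emeasure (density lborel (normal_density 0 (t * sqrt (r / (1 - r))))) {-\<delta>..\<delta>}" for r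
  proof (cases "0 < r \<and> r \<le> a")
    case False
    then show ?thesis by (cases "r = 0") auto
  next
    case True
    then have r: "0 < r" "r < 1" using a by auto
    define N where "N = density lborel (normal_density 0 (t * sqrt (r / (1 - r))))"
    have N: "prob_space N" unfolding N_def using r assms(1) by (intro prob_space_normal_density_nonzero) simp
    have "r * (1 + 2 * q) \<le> 1"
      using True q by (simp add: a_def le_divide_eq mult_ac)
    then have "(t / \<delta>)\<^sup>2 * r / (1 - r) \<le> 1/2"
      using r by (simp add: q_def divide_le_eq algebra_simps)
    then have "measure N {x. \<delta> < \<bar>x\<bar>} \<le> 1/2"
      using normal_mixture_component_tail_le[OF assms(1,2) r] unfolding N_def by linarith
    then have half: "1/2 \<le> measure N {-\<delta>..\<delta>}"
      using measure_interval_eq_one_minus_tail[OF N, of \<delta>] by (simp add: N_def)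
    have "1 / (B * sqrt r) \<le> beta_density (1/2) (1/2) r"
      unfolding beta_density_half[OF r, folded B_def] using r B
      by (intro divide_left_mono mult_left_le) (auto simp: real_sqrt_le_1_iff)
    then have "1 / (B * sqrt r) * (1/2) \<le> beta_density (1/2) (1/2) r * measure N {-\<delta>..\<delta>}"
      using half B r beta_density_nonneg[of "1/2" "1/2" r] by (intro mult_mono) auto
    moreover have "1 / (2 * B) * (1 / sqrt r) = 1 / (B * sqrt r) * (1/2)" by simp
    ultimately have "1 / (2 * B) * (1 / sqrt r) \<le> beta_density (1/2) (1/2) r * measure N {-\<delta>..\<delta>}"
      by simp
    then show ?thesis
      using True beta_density_nonneg[of "1/2" "1/2" r]
        finite_measure.emeasure_eq_measure[OF prob_space.finite_measure[OF N]]
      by (simp add: N_def ennreal_mult'[symmetric] ennreal_leI)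
  qed
  have "ennreal (sqrt a / B) = (\<integral>\<^sup>+r. ennreal (1 / (2 * B) * (1 / sqrt r)) * indicator {0..a} r \<partial>lborel)"
    using has_integral_mult_right[OF has_integral_inv_sqrt[OF a(1)], of "1 / (2 * B)"] B a
    by (subst nn_integral_has_integral_lebesgue') auto
  also have "\<dots> \<le> (\<integral>\<^sup>+r. ennreal (beta_density (1/2) (1/2) r)
        * emeasure (density lborel (normal_density 0 (t * sqrt (r / (1 - r))))) {-\<delta>..\<delta>} \<partial>lborel)"
    by (intro nn_integral_mono pointwise)
  also have "\<dots> = emeasure (density lborel (offdiag_density (1/2) (1/2) t)) {-\<delta>..\<delta>}"
    using assms(1) by (subst emeasure_offdiag_density) auto
  finally show ?thesis
    using finite_measure.emeasure_eq_measure[OF prob_space.finite_measure[OF prob_space_offdiag_density[of "1/2" "1/2" t]]]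
      assms(1) B a
    by (simp add: a_def q_def real_sqrt_divide ennreal_le_iff mult.commute)
qed

lemma exp_neg_double_le_one_minus:
  fixes y :: real
  assumes "0 \<le> y" "y \<le> 1/2"
  shows "exp (- (2 * y)) \<le> 1 - y"
proof -
  have "exp (- (2 * y)) \<le> 1 / (1 + 2 * y)"
    using exp_ge_add_one_self[of "2 * y"] assms by (simp add: exp_minus field_simps)
  also have "\<dots> \<le> 1 - y"
  proof -
    have "1 \<le> (1 - y) * (1 + 2 * y)"
      using assms mult_right_mono[of y "1/2" y] by (simp add: algebra_simps)
    then show ?thesis using assms by (simp add: divide_le_eq)
  qed
  finally show ?thesis .
qed

text \<open>Near $x = 0$ the mass of the interval is at least $1 - O(x)$, which the exponential
  matches; away from $0$ it is bounded below by a constant, which the exponential undercuts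
  once $L$ is large.\<close>

lemma offdiag_interval_ge_exp:
  assumes "0 < K"
  obtains L where "0 < L"
    "\<And>t \<delta>. t \<noteq> 0 \<Longrightarrow> 0 < \<delta> \<Longrightarrow> \<bar>t\<bar> / \<delta> \<le> K \<Longrightarrow>
       exp (- L * (\<bar>t\<bar> / \<delta>)) \<le> measure (density lborel (offdiag_density (1/2) (1/2) t)) {-\<delta>..\<delta>}"
proof -
  define B :: real where "B = Beta (1/2) (1/2)"
  have B: "0 < B" unfolding B_def by (simp add: Beta_real_pos)
  define x0 where "x0 = min (1/2) (B/12)"
  have x0: "0 < x0" "x0 \<le> 1/2" "x0 \<le> B/12" using B by (auto simp: x0_def)
  define q0 where "q0 = 1 / (B * sqrt (1 + 2 * K\<^sup>2))"
  have q0: "0 < q0" using B unfolding q0_def by (simp add: add_pos_nonneg)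
  define L where "L = max (12 / B) (\<bar>ln q0\<bar> / x0)"
  have L: "0 < L" "12 / B \<le> L" "\<bar>ln q0\<bar> / x0 \<le> L" using B unfolding L_def by (auto simp: less_max_iff_disj)
  have "exp (- L * (\<bar>t\<bar> / \<delta>)) \<le> measure (density lborel (offdiag_density (1/2) (1/2) t)) {-\<delta>..\<delta>}"
    if t: "t \<noteq> 0" and \<delta>: "0 < \<delta>" and xK: "\<bar>t\<bar> / \<delta> \<le> K" for t \<delta>
  proof -
    define x where "x = \<bar>t\<bar> / \<delta>"
    have x: "0 \<le> x" "x \<le> K" using \<delta> xK by (auto simp: x_def)
    show ?thesis
    proof (cases "x \<le> x0")
      case True
      have "exp (- L * x) \<le> exp (- (2 * (6 * x / B)))"
        using mult_right_mono[OF L(2) x(1)] B by (simp add: field_simps)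
      also have "\<dots> \<le> 1 - 6 * x / B"
        using True x0 x B by (intro exp_neg_double_le_one_minus) (auto simp: field_simps)
      also have "\<dots> \<le> measure (density lborel (offdiag_density (1/2) (1/2) t)) {-\<delta>..\<delta>}"
        using offdiag_interval_ge_one_minus[OF t \<delta>] True x0(2) unfolding x_def B_def by linarith
      finally show ?thesis by (simp add: x_def)
    next
      case False
      have "- ln q0 \<le> L * x0" using L(3) x0 by (simp add: divide_le_eq)
      also have "\<dots> \<le> L * x" using False L by (intro mult_left_mono) auto
      finally have "- L * x \<le> ln q0" by simp
      then have "exp (- L * x) \<le> q0" using q0 by (metis exp_le_cancel_iff exp_ln)
      also have "q0 \<le> 1 / (B * sqrt (1 + 2 * (t / \<delta>)\<^sup>2))"
      proof -
        have "(t / \<delta>)\<^sup>2 \<le> K\<^sup>2"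
          using x power_mono[of x K 2] \<delta> by (simp add: x_def power_divide)
        then show ?thesis unfolding q0_def using B
          by (intro divide_left_mono mult_left_mono mult_pos_pos) (auto intro: add_pos_nonneg)
      qed
      also have "\<dots> \<le> measure (density lborel (offdiag_density (1/2) (1/2) t)) {-\<delta>..\<delta>}"
        using offdiag_interval_ge[OF t \<delta>] unfolding B_def .
      finally show ?thesis by (simp add: x_def)
    qed
  qed
  with L(1) that show ?thesis by blast
qed

section \<open>The prior\<close>

lemma finite_entry_idx: "finite (entry_idx p)"
  by (rule finite_subset[of _ "{..<p} \<times> {..<p}"]) (auto simp: entry_idx_def)

lemma measurable_prior_u_entry:
  assumes "e \<in> entry_idx p"
  shows "(\<lambda>s. s e) \<in> borel_measurable (prior_u p a b t lam)"
proof -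
  define M where "M = (\<lambda>(j::nat, k::nat). if j = k then density lborel (gamma_density 1 (lam / 2))
        else density lborel (offdiag_density a b t))"
  have "(\<lambda>s. s e) \<in> measurable (PiM (entry_idx p) M) (M e)"
    by (rule measurable_component_singleton[OF assms])
  moreover have "sets (M e) = sets borel" by (cases e) (auto simp: M_def)
  ultimately show ?thesis
    unfolding prior_u_def M_def[symmetric] using measurable_cong_sets by blast
qed

lemma sym_mat_of_in_U_set_iff:
  assumes "1 \<le> p" "0 < tau"
  shows "sym_mat_of p s \<in> U_set p tau \<longleftrightarrow> (\<forall>v. form_bounded p tau (\<lambda>i j. s (min i j, max i j)) v)"
proof -
  have "sym_mat_of p s \<in> carrier_mat p p" by (simp add: sym_mat_of_def)
  moreover have "(sym_mat_of p s)\<^sup>T = sym_mat_of p s"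
    by (rule eq_matI) (auto simp: sym_mat_of_def min.commute max.commute)
  moreover have "quad_form p (\<lambda>i j. sym_mat_of p s $$ (i, j)) = quad_form p (\<lambda>i j. s (min i j, max i j))"
    unfolding quad_form_def by (intro ext sum.cong refl) (simp add: sym_mat_of_def)
  ultimately show ?thesis
    using U_set_iff_form_bounded[OF _ _ assms] by (simp add: form_bounded_def)
qed

lemma sets_prior_u_U_event:
  assumes "1 \<le> p" "0 < tau"
  shows "{s \<in> space (prior_u p a b t lam). sym_mat_of p s \<in> U_set p tau} \<in> sets (prior_u p a b t lam)"
proof -
  let ?M = "prior_u p a b t lam"
  have "(\<lambda>s. quad_form p (\<lambda>i j. s (min i j, max i j)) v) \<in> borel_measurable ?M"
    "(\<lambda>s. sq_norm p v) \<in> borel_measurable ?M" for v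
    unfolding quad_form_def
    by (intro borel_measurable_sum borel_measurable_times borel_measurable_const measurable_prior_u_entry;
        auto simp: entry_idx_def)+
  then have "{s \<in> space ?M. form_bounded p tau (\<lambda>i j. s (min i j, max i j)) v} \<in> sets ?M" for v
    unfolding form_bounded_def by measurable
  then have "{s \<in> space ?M. \<forall>xs::rat list. form_bounded p tau (\<lambda>i j. s (min i j, max i j)) (\<lambda>i. of_rat (xs ! i))}
      \<in> sets ?M"
    by (intro sets.sets_Collect_countable_All)
  then show ?thesis
    by (simp only: sym_mat_of_in_U_set_iff[OF assms] form_bounded_rat_iff)
qed

lemma prior_u_box_subset_U_event:
  assumes "1 \<le> p" "3 < tau"
  shows "(\<Pi>\<^sub>E (j, k)\<in>entry_idx p. if j = k then {tau/4..tau/2} else {- (1 / (4 * real p))..1 / (4 * real p)})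
    \<subseteq> {s \<in> space (prior_u p a b t lam). sym_mat_of p s \<in> U_set p tau}"
proof
  fix s assume s: "s \<in> (\<Pi>\<^sub>E (j, k)\<in>entry_idx p. if j = k then {tau/4..tau/2} else {- (1 / (4 * real p))..1 / (4 * real p)})"
  have entry: "s (j, k) \<in> (if j = k then {tau/4..tau/2} else {- (1 / (4 * real p))..1 / (4 * real p)})"
    if "(j, k) \<in> entry_idx p" for j k
    using s that by (auto simp: PiE_iff)
  have "s (i, i) \<in> {tau/4..tau/2}" if "i < p" for i
    using entry[of i i] that by (simp add: entry_idx_def)
  moreover have "\<bar>s (min i j, max i j)\<bar> \<le> 1 / (4 * real p)" if "i < p" "j < p" "i \<noteq> j" for i j
  proof -
    have "(min i j, max i j) \<in> entry_idx p" "min i j \<noteq> max i j"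
      using that by (auto simp: entry_idx_def)
    then show ?thesis using entry[of "min i j" "max i j"] by (simp add: abs_le_iff)
  qed
  ultimately have "form_bounded p tau (\<lambda>i j. s (min i j, max i j)) v" for v
    using assms by (intro form_bounded_if_diag_dominant) auto
  moreover have "s \<in> space (prior_u p a b t lam)"
    using s by (auto simp: prior_u_def space_PiM PiE_iff split: prod.splits)
  ultimately show "s \<in> {s \<in> space (prior_u p a b t lam). sym_mat_of p s \<in> U_set p tau}"
    using sym_mat_of_in_U_set_iff[of p tau s] assms by auto
qed

lemma prob_space_prior_u:
  assumes "0 < a" "0 < b" "t \<noteq> 0" "0 < lam"
  shows "prob_space (prior_u p a b t lam)"
  unfolding prior_u_def using assms
  by (intro prob_space_PiM) (auto simp: prob_space_gamma_density_1 prob_space_offdiag_density)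

lemma measure_prior_u_box:
  assumes "0 < a" "0 < b" "t \<noteq> 0" "0 < lam" "D \<in> sets borel" "R \<in> sets borel"
  defines "qd \<equiv> measure (density lborel (gamma_density 1 (lam / 2))) D"
    and "qo \<equiv> measure (density lborel (offdiag_density a b t)) R"
  shows "measure (prior_u p a b t lam) (\<Pi>\<^sub>E (j, k)\<in>entry_idx p. if j = k then D else R)
    = qd ^ p * qo ^ card {e \<in> entry_idx p. fst e \<noteq> snd e}"
proof -
  define M where "M = (\<lambda>(j::nat, k::nat). if j = k then density lborel (gamma_density 1 (lam / 2))
        else density lborel (offdiag_density a b t))"
  have "prob_space (M e)" for e
    using assms prob_space_gamma_density_1 prob_space_offdiag_density by (cases e) (auto simp: M_def)
  then interpret finite_product_prob_space M "entry_idx p"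
    unfolding finite_product_prob_space_def finite_product_sigma_finite_def
      finite_product_sigma_finite_axioms_def product_prob_space_def product_prob_space_axioms_def
      product_sigma_finite_def
    using prob_space_imp_sigma_finite finite_entry_idx by blast
  have "measure (prior_u p a b t lam) (\<Pi>\<^sub>E (j, k)\<in>entry_idx p. if j = k then D else R)
      = (\<Prod>e\<in>entry_idx p. if fst e = snd e then qd else qo)"
    unfolding prior_u_def M_def[symmetric] using assms
    by (subst prob_times) (auto simp: M_def qd_def qo_def split: prod.splits intro!: prod.cong)
  also have "\<dots> = qd ^ card {e \<in> entry_idx p. fst e = snd e} * qo ^ card {e \<in> entry_idx p. fst e \<noteq> snd e}"
    by (subst prod.If_cases[OF finite_entry_idx]) (simp add: Int_def)
  also have "card {e \<in> entry_idx p. fst e = snd e} = p"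
  proof -
    have "{e \<in> entry_idx p. fst e = snd e} = (\<lambda>j. (j, j)) ` {..<p}"
      by (auto simp: entry_idx_def)
    then show ?thesis by (simp add: card_image inj_on_def)
  qed
  finally show ?thesis .
qed

lemma prior_u_U_event_ge_box:
  assumes "0 < lam" "3 < tau" "1 \<le> p" "t \<noteq> 0"
  defines "qd \<equiv> measure (density lborel (gamma_density 1 (lam / 2))) {tau/4..tau/2}"
    and "qo \<equiv> measure (density lborel (offdiag_density (1/2) (1/2) t)) {- (1 / (4 * real p))..1 / (4 * real p)}"
  shows "(qd * qo ^ p) ^ p \<le> measure (prior_u p (1/2) (1/2) t lam)
      {s \<in> space (prior_u p (1/2) (1/2) t lam). sym_mat_of p s \<in> U_set p tau}"
proof -
  interpret Mo: prob_space "density lborel (offdiag_density (1/2) (1/2) t)"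
    using assms(4) by (intro prob_space_offdiag_density) auto
  have "card {e \<in> entry_idx p. fst e \<noteq> snd e} \<le> card ({..<p} \<times> {..<p})"
    by (intro card_mono) (auto simp: entry_idx_def)
  then have "qo ^ (p * p) \<le> qo ^ card {e \<in> entry_idx p. fst e \<noteq> snd e}"
    by (intro power_decreasing) (auto simp: qo_def)
  then have "(qd * qo ^ p) ^ p \<le> qd ^ p * qo ^ card {e \<in> entry_idx p. fst e \<noteq> snd e}"
    by (simp add: power_mult_distrib power_mult[symmetric] qd_def mult_left_mono)
  also have "\<dots> = measure (prior_u p (1/2) (1/2) t lam)
      (\<Pi>\<^sub>E (j, k)\<in>entry_idx p. if j = k then {tau/4..tau/2} else {- (1 / (4 * real p))..1 / (4 * real p)})"
    unfolding qd_def qo_def using assms by (subst measure_prior_u_box) auto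
  also have "\<dots> \<le> measure (prior_u p (1/2) (1/2) t lam)
      {s \<in> space (prior_u p (1/2) (1/2) t lam). sym_mat_of p s \<in> U_set p tau}"
  proof (rule finite_measure.finite_measure_mono)
    show "finite_measure (prior_u p (1/2) (1/2) t lam)"
      using prob_space_prior_u[of "1/2" "1/2" t lam p] assms by (simp add: prob_space.finite_measure)
  qed (use prior_u_box_subset_U_event[OF assms(3,2), where a = "1/2" and b = "1/2" and t = t and lam = lam]
        sets_prior_u_U_event[OF assms(3)] assms(2) in auto)
  finally show ?thesis .
qed

lemma scale_bound_of_rate:
  assumes rate: "t\<^sup>2 * (real n * real P ^ 4 * tau\<^sup>2) \<le> c" and "3 < tau"
  shows "4 * real P * \<bar>t\<bar> * (real P * sqrt (real n)) \<le> 2 * sqrt c"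
proof (rule power2_le_imp_le)
  have "0 \<le> t\<^sup>2 * (real n * real P ^ 4 * tau\<^sup>2)" by simp
  then have "0 \<le> c" using rate by linarith
  then show "0 \<le> 2 * sqrt c" by simp
  have "t\<^sup>2 * (real n * real P ^ 4) * 9 \<le> t\<^sup>2 * (real n * real P ^ 4) * tau\<^sup>2"
    using power_mono[of 3 tau 2] assms(2) by (intro mult_left_mono) auto
  then have "t\<^sup>2 * (real n * real P ^ 4) * 9 \<le> c" using rate by (simp add: mult_ac)
  then show "(4 * real P * \<bar>t\<bar> * (real P * sqrt (real n)))\<^sup>2 \<le> (2 * sqrt c)\<^sup>2"
    by (simp add: power_mult_distrib power2_eq_square power4_eq_xxxx algebra_simps)
qed

lemma offdiag_box_factor_ge:
  assumes "0 < L" and q_exp: "\<And>t \<delta>. t \<noteq> 0 \<Longrightarrow> 0 < \<delta> \<Longrightarrow> \<bar>t\<bar> / \<delta> \<le> K \<Longrightarrow>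
       exp (- L * (\<bar>t\<bar> / \<delta>)) \<le> measure (density lborel (offdiag_density (1/2) (1/2) t)) {-\<delta>..\<delta>}"
    and "t \<noteq> 0" "1 \<le> P" "1 \<le> n" and scale: "4 * real P * \<bar>t\<bar> * (real P * sqrt (real n)) \<le> K"
  shows "exp (- (L * K) / sqrt n)
    \<le> measure (density lborel (offdiag_density (1/2) (1/2) t)) {- (1 / (4 * real P))..1 / (4 * real P)} ^ P"
proof -
  define x where "x = 4 * real P * \<bar>t\<bar>"
  have "1 * 1 \<le> real P * sqrt (real n)" using assms(4,5) by (intro mult_mono) auto
  then have "x \<le> K" using scale mult_left_mono[of 1 "real P * sqrt (real n)" x] by (simp add: x_def)
  then have "exp (- L * x) \<le> measure (density lborel (offdiag_density (1/2) (1/2) t)) {- (1 / (4 * real P))..1 / (4 * real P)}"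
    using q_exp[of t "1 / (4 * real P)"] assms(3,4) by (simp add: x_def mult_ac)
  then have "exp (- L * x) ^ P \<le> measure (density lborel (offdiag_density (1/2) (1/2) t)) {- (1 / (4 * real P))..1 / (4 * real P)} ^ P"
    by (intro power_mono) auto
  moreover have "exp (- (L * K) / sqrt n) \<le> exp (- L * x) ^ P"
  proof -
    have "L * (x * (real P * sqrt (real n))) \<le> L * K"
      using scale \<open>0 < L\<close> by (simp add: x_def)
    then have "real P * (- L * x) \<ge> - (L * K) / sqrt n"
      using assms(5) by (simp add: field_simps)
    then show ?thesis by (simp add: exp_of_nat_mult[symmetric])
  qed
  ultimately show ?thesis by linarith
qed

lemma prior_u_U_event_gt:
  assumes lam: "0 < lam" and tau: "3 < tau" and p: "1 \<le> p" and n: "1 \<le> n" and t: "t \<noteq> 0"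
    and L: "0 < L" and q_exp: "\<And>t \<delta>. t \<noteq> 0 \<Longrightarrow> 0 < \<delta> \<Longrightarrow> \<bar>t\<bar> / \<delta> \<le> K \<Longrightarrow>
       exp (- L * (\<bar>t\<bar> / \<delta>)) \<le> measure (density lborel (offdiag_density (1/2) (1/2) t)) {-\<delta>..\<delta>}"
    and scale: "4 * real p * \<bar>t\<bar> * (real p * sqrt (real n)) \<le> K"
  shows "(lam * tau / 8 * exp (- lam * tau / 4 - L * K / sqrt n)) ^ p
    < measure (prior_u p (1/2) (1/2) t lam) {s \<in> space (prior_u p (1/2) (1/2) t lam). sym_mat_of p s \<in> U_set p tau}"
proof -
  define qd where "qd = measure (density lborel (gamma_density 1 (lam / 2))) {tau/4..tau/2}"
  define qo where "qo = measure (density lborel (offdiag_density (1/2) (1/2) t)) {- (1 / (4 * real p))..1 / (4 * real p)}"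
  have qd: "lam * tau / 8 * exp (- lam * tau / 4) < qd"
    unfolding qd_def using gamma_density_1_interval_gt[OF lam] tau by simp
  have qo: "exp (- (L * K) / sqrt n) \<le> qo ^ p"
    unfolding qo_def using L q_exp t p n scale by (rule offdiag_box_factor_ge)
  have "exp (- lam * tau / 4 - L * K / sqrt n) = exp (- lam * tau / 4) * exp (- (L * K) / sqrt n)"
    unfolding exp_add[symmetric] by simp
  then have "lam * tau / 8 * exp (- lam * tau / 4 - L * K / sqrt n) < qd * qo ^ p"
    using qd qo lam tau by (simp only: mult.assoc[symmetric]) (intro mult_less_le_imp_less; simp)
  then have "(lam * tau / 8 * exp (- lam * tau / 4 - L * K / sqrt n)) ^ p < (qd * qo ^ p) ^ p"
    using lam tau p by (intro power_strict_mono) auto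
  also have "\<dots> \<le> measure (prior_u p (1/2) (1/2) t lam)
      {s \<in> space (prior_u p (1/2) (1/2) t lam). sym_mat_of p s \<in> U_set p tau}"
    unfolding qd_def qo_def by (rule prior_u_U_event_ge_box[OF lam tau p t])
  finally show ?thesis .
qed

theorem lemma2:
  fixes p :: "nat \<Rightarrow> nat" and tau1 :: "nat \<Rightarrow> real" and lam tau :: real
  assumes lam: "lam > 0"
    and tau: "tau > 3"
    and p_pos: "\<forall>n. p n \<ge> 1"
    and tau1_rate: "\<exists>c1 c2. 0 < c1 \<and> 0 < c2 \<and> (\<forall>n \<ge> 1.
          c1 \<le> (tau1 n)\<^sup>2 / (1 / (real n * real (p n) ^ 4 * tau\<^sup>2)) \<and>
          (tau1 n)\<^sup>2 / (1 / (real n * real (p n) ^ 4 * tau\<^sup>2)) \<le> c2)"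
  shows "\<exists>C > 0. \<forall>n \<ge> 1.
           measure (prior_u (p n) (1/2) (1/2) (tau1 n) lam)
             {s \<in> space (prior_u (p n) (1/2) (1/2) (tau1 n) lam).
                sym_mat_of (p n) s \<in> U_set (p n) tau}
           > (lam * tau / 8 * exp (- lam * tau / 4 - C / sqrt (real n))) ^ p n"
proof -
  obtain c1 c2 where c: "0 < c1" "0 < c2" and rate: "\<And>n. 1 \<le> n \<Longrightarrow>
      c1 \<le> (tau1 n)\<^sup>2 * (real n * real (p n) ^ 4 * tau\<^sup>2) \<and> (tau1 n)\<^sup>2 * (real n * real (p n) ^ 4 * tau\<^sup>2) \<le> c2"
    using tau1_rate by auto
  obtain L where L: "0 < L" and q_exp: "\<And>t \<delta>. t \<noteq> 0 \<Longrightarrow> 0 < \<delta> \<Longrightarrow> \<bar>t\<bar> / \<delta> \<le> 2 * sqrt c2 \<Longrightarrow>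
       exp (- L * (\<bar>t\<bar> / \<delta>)) \<le> measure (density lborel (offdiag_density (1/2) (1/2) t)) {-\<delta>..\<delta>}"
    using offdiag_interval_ge_exp[of "2 * sqrt c2"] c by auto
  have "(lam * tau / 8 * exp (- lam * tau / 4 - L * (2 * sqrt c2) / sqrt (real n))) ^ p n
      < measure (prior_u (p n) (1/2) (1/2) (tau1 n) lam)
          {s \<in> space (prior_u (p n) (1/2) (1/2) (tau1 n) lam). sym_mat_of (p n) s \<in> U_set (p n) tau}"
    if n: "1 \<le> n" for n
  proof (rule prior_u_U_event_gt[OF lam tau p_pos[rule_format] n _ L q_exp])
    show "tau1 n \<noteq> 0" using rate[OF n] c(1) by auto
    show "4 * real (p n) * \<bar>tau1 n\<bar> * (real (p n) * sqrt (real n)) \<le> 2 * sqrt c2"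
      using rate[OF n] tau by (intro scale_bound_of_rate) auto
  qed
  then show ?thesis using L c(2) by (intro exI[of _ "L * (2 * sqrt c2)"]) auto
qed

end
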